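(* Let $\Omega\subset\mathbb{R}^3$ be a domain with boundary $\partial\Omega$ and outward unit normal $\mathbf{n}$, and consider a non-reactive fluid with density $\rho>0$ and temperature $T>0$, heat flux $\mathbf{q}=-K\nabla T$ and entropy flux by heat conduction $\mathbf{q}_s=-\frac{K}{T}\nabla T$, where $K$ is a nonnegative matrix (thermal conductivity). Let $S_T=K/T\geq 0$, let $\mathcal{G}_T e=-\nabla(e/\rho)$ on scalar fields and $\mathcal{G}_T^{*}\mathbf{w}=\frac{1}{\rho}\mathrm{div}\,\mathbf{w}$ on vector fields (the formal adjoint of $\mathcal{G}_T$), let $\mathcal{Q}_T e=\frac{1}{\rho T}\left\|\nabla\frac{e}{\rho}\right\|^2_{S_T}$ (so that $\mathcal{Q}_T e\geq 0$ for all $e$), and define $$\mathcal{J}_{\mathbf{q}}=\mathcal{Q}_T-\mathcal{G}_T^{*}S_T\mathcal{G}_T .$$ Then, with the entropy effort $e_s=\rho T$, the rate of entropy addition by heat flux satisfies $$-\frac{1}{\rho T}\,\mathrm{div}\,\mathbf{q}=\mathcal{J}_{\mathbf{q}}e_s,$$ and $$\int_\Omega e_s\,\mathcal{J}_{\mathbf{q}}e_s=-\int_{\partial\Omega}T\,(\mathbf{q}_s\cdot\mathbf{n}).$$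
   Context: For a vector $\mathbf{v}$ and matrix $X$, $\|\mathbf{v}\|^2_X=\mathbf{v}^{\mathsf T}X^{\mathsf T}\mathbf{v}$. $\mathcal{Q}_T$ is a (nonlinear) operator on scalar fields. Integrals over $\Omega$ and $\partial\Omega$ are with respect to volume and surface measure. *)

theory Defs
  imports "HOL-Analysis.Analysis"
begin

definition partial :: "(real^3 \<Rightarrow> real) \<Rightarrow> 3 \<Rightarrow> real^3 \<Rightarrow> real" where
  "partial f j x = frechet_derivative f (at x) (axis j 1)"

definition grad :: "(real^3 \<Rightarrow> real) \<Rightarrow> real^3 \<Rightarrow> real^3" where
  "grad f x = (\<chi> j. partial f j x)"

definition divg :: "(real^3 \<Rightarrow> real^3) \<Rightarrow> real^3 \<Rightarrow> real" where
  "divg w x = (\<Sum>i\<in>UNIV. partial (\<lambda>y. w y $ i) i x)"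

definition C1_on :: "(real^3) set \<Rightarrow> (real^3 \<Rightarrow> real) \<Rightarrow> bool" where
  "C1_on V f \<longleftrightarrow> (\<forall>x\<in>V. f differentiable (at x)) \<and>
                   (\<forall>j. continuous_on V (partial f j))"

definition C2_on :: "(real^3) set \<Rightarrow> (real^3 \<Rightarrow> real) \<Rightarrow> bool" where
  "C2_on V f \<longleftrightarrow> C1_on V f \<and> (\<forall>j. C1_on V (partial f j))"

definition C1_vec_on :: "(real^3) set \<Rightarrow> (real^3 \<Rightarrow> real^3) \<Rightarrow> bool" where
  "C1_vec_on V w \<longleftrightarrow> (\<forall>i. C1_on V (\<lambda>x. w x $ i))"

definition C1_mat_on :: "(real^3) set \<Rightarrow> (real^3 \<Rightarrow> real^3^3) \<Rightarrow> bool" where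
  "C1_mat_on V K \<longleftrightarrow> (\<forall>i j. C1_on V (\<lambda>x. K x $ i $ j))"

definition nonneg_matrix :: "real^3^3 \<Rightarrow> bool" where
  "nonneg_matrix A \<longleftrightarrow> (\<forall>v. v \<bullet> (A *v v) \<ge> 0)"

definition wnorm_sq :: "real^3 \<Rightarrow> real^3^3 \<Rightarrow> real" where
  "wnorm_sq v X = (v v* transpose X) \<bullet> v"

text \<open>Boundary data of a domain: surface measure sigma on the boundary and outward unit
  normal n, characterised by the Gauss divergence theorem for all vector fields that are
  C^1 on a neighbourhood of the closure (HOL-Analysis has no surface measure).\<close>
definition gauss_boundary :: "(real^3) set \<Rightarrow> (real^3) measure \<Rightarrow> (real^3 \<Rightarrow> real^3) \<Rightarrow> bool" where
  "gauss_boundary \<Omega> \<sigma> n \<longleftrightarrow>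
     space \<sigma> = frontier \<Omega> \<and> sets \<sigma> = sets (restrict_space lborel (frontier \<Omega>)) \<and>
     (\<forall>x\<in>frontier \<Omega>. norm (n x) = 1) \<and>
     (\<forall>w V. open V \<and> closure \<Omega> \<subseteq> V \<and> C1_vec_on V w \<longrightarrow>
        divg w integrable_on \<Omega> \<and> integrable \<sigma> (\<lambda>x. w x \<bullet> n x) \<and>
        integral \<Omega> (divg w) = integral\<^sup>L \<sigma> (\<lambda>x. w x \<bullet> n x))"

definition S_T :: "(real^3 \<Rightarrow> real) \<Rightarrow> (real^3 \<Rightarrow> real^3^3) \<Rightarrow> real^3 \<Rightarrow> real^3^3" where
  "S_T T K x = (1 / T x) *\<^sub>R K x"

definition G_T :: "(real^3 \<Rightarrow> real) \<Rightarrow> (real^3 \<Rightarrow> real) \<Rightarrow> real^3 \<Rightarrow> real^3" where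
  "G_T \<rho> e x = - grad (\<lambda>y. e y / \<rho> y) x"

definition G_T_adj :: "(real^3 \<Rightarrow> real) \<Rightarrow> (real^3 \<Rightarrow> real^3) \<Rightarrow> real^3 \<Rightarrow> real" where
  "G_T_adj \<rho> w x = (1 / \<rho> x) * divg w x"

definition Q_T :: "(real^3 \<Rightarrow> real) \<Rightarrow> (real^3 \<Rightarrow> real) \<Rightarrow> (real^3 \<Rightarrow> real^3^3)
                   \<Rightarrow> (real^3 \<Rightarrow> real) \<Rightarrow> real^3 \<Rightarrow> real" where
  "Q_T \<rho> T K e x = (1 / (\<rho> x * T x)) * wnorm_sq (grad (\<lambda>y. e y / \<rho> y) x) (S_T T K x)"

definition J_q :: "(real^3 \<Rightarrow> real) \<Rightarrow> (real^3 \<Rightarrow> real) \<Rightarrow> (real^3 \<Rightarrow> real^3^3)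
                   \<Rightarrow> (real^3 \<Rightarrow> real) \<Rightarrow> real^3 \<Rightarrow> real" where
  "J_q \<rho> T K e x = Q_T \<rho> T K e x - G_T_adj \<rho> (\<lambda>y. S_T T K y *v G_T \<rho> e y) x"

definition heat_flux :: "(real^3 \<Rightarrow> real) \<Rightarrow> (real^3 \<Rightarrow> real^3^3) \<Rightarrow> real^3 \<Rightarrow> real^3" where
  "heat_flux T K x = - (K x *v grad T x)"

definition entropy_flux :: "(real^3 \<Rightarrow> real) \<Rightarrow> (real^3 \<Rightarrow> real^3^3) \<Rightarrow> real^3 \<Rightarrow> real^3" where
  "entropy_flux T K x = - ((1 / T x) *\<^sub>R (K x *v grad T x))"

end

theory Submission
  imports Defs
begin

text \<open>For \<open>e\<^sub>s = \<rho> T\<close> one has \<open>e\<^sub>s / \<rho> = T\<close>, so \<open>S\<^sub>T \<G>\<^sub>T e\<^sub>s = q / T = q\<^sub>s\<close>. The product rule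
  for the divergence gives \<open>\<G>\<^sub>T\<^sup>* q\<^sub>s = div q / (\<rho>T) + \<nabla>T\<cdot>K\<nabla>T / (\<rho>T\<^sup>2)\<close>, whose second term is
  exactly \<open>\<Q>\<^sub>T e\<^sub>s\<close>; hence \<open>\<J>\<^sub>q e\<^sub>s = -div q / (\<rho>T)\<close>. Thus \<open>e\<^sub>s \<J>\<^sub>q e\<^sub>s = -div q\<close>, and Gauss's
  theorem turns its integral into \<open>-\<integral> q\<cdot>n = -\<integral> T q\<^sub>s\<cdot>n\<close>.\<close>

lemma partial_eqI:
  "(f has_derivative f') (at x) \<Longrightarrow> partial f j x = f' (axis j 1)"
  unfolding partial_def by (metis frechet_derivative_at)

lemma partial_cong_open:
  assumes "open X" "x \<in> X" "\<And>y. y \<in> X \<Longrightarrow> f y = g y"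
  shows "partial f j x = partial g j x"
proof -
  have "(f has_derivative D) (at x) \<longleftrightarrow> (g has_derivative D) (at x)" for D
    using has_derivative_transform_within_open[of f D x UNIV X g]
      has_derivative_transform_within_open[of g D x UNIV X f] assms by auto
  then show ?thesis
    unfolding partial_def frechet_derivative_def by simp
qed

lemma partial_uminus:
  "f differentiable at x \<Longrightarrow> partial (\<lambda>y. - f y) j x = - partial f j x"
  unfolding partial_def
  by (intro partial_eqI[unfolded partial_def] has_derivative_minus)
     (simp add: frechet_derivative_works)

lemma partial_mult:
  assumes "f differentiable at x" "g differentiable at x"
  shows "partial (\<lambda>y. f y * g y) j x = f x * partial g j x + partial f j x * g x"
  unfolding partial_def
  by (intro partial_eqI[unfolded partial_def] has_derivative_mult)
     (use assms in \<open>simp_all add: frechet_derivative_works\<close>)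

lemma partial_sum:
  assumes "finite A" "\<And>i. i \<in> A \<Longrightarrow> f i differentiable at x"
  shows "partial (\<lambda>y. \<Sum>i\<in>A. f i y) j x = (\<Sum>i\<in>A. partial (f i) j x)"
  unfolding partial_def
  by (intro partial_eqI[unfolded partial_def] has_derivative_sum)
     (use assms in \<open>simp_all add: frechet_derivative_works\<close>)

lemma partial_inverse:
  assumes "f differentiable at x" "f x \<noteq> 0"
  shows "partial (\<lambda>y. 1 / f y) j x = - partial f j x / (f x)\<^sup>2"
proof -
  have "((\<lambda>y. 1 / f y) has_derivative
      (\<lambda>h. - 1 * (inverse (f x) * frechet_derivative f (at x) h * inverse (f x)) + 0 / f x)) (at x)"
    by (rule has_derivative_divide) (use assms frechet_derivative_works in auto)
  from partial_eqI[OF this, of j] show ?thesis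
    using assms(2) by (simp add: partial_def power2_eq_square divide_inverse mult_ac)
qed

lemma divg_cong_open:
  assumes "open X" "x \<in> X" "\<And>y. y \<in> X \<Longrightarrow> v y = w y"
  shows "divg v x = divg w x"
  unfolding divg_def by (intro sum.cong refl partial_cong_open[OF assms(1,2)]) (simp add: assms(3))

lemma grad_cong_open:
  assumes "open X" "x \<in> X" "\<And>y. y \<in> X \<Longrightarrow> f y = g y"
  shows "grad f x = grad g x"
  unfolding grad_def by (simp add: partial_cong_open[OF assms])

lemma divg_scaleR:
  assumes "f differentiable at x" "\<And>i. (\<lambda>y. w y $ i) differentiable at x"
  shows "divg (\<lambda>y. f y *\<^sub>R w y) x = f x * divg w x + grad f x \<bullet> w x"
  using assms
  by (simp add: divg_def grad_def inner_vec_def partial_mult sum.distrib sum_distrib_left)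

lemma grad_inverse:
  assumes "f differentiable at x" "f x \<noteq> 0"
  shows "grad (\<lambda>y. 1 / f y) x = - (1 / (f x)\<^sup>2) *\<^sub>R grad f x"
  using assms by (simp add: grad_def partial_inverse vec_eq_iff)

lemma C1_on_continuous_on: "C1_on V f \<Longrightarrow> continuous_on V f"
  unfolding C1_on_def
  by (meson continuous_at_imp_continuous_on differentiable_imp_continuous_within)

lemma C1_on_uminus: "C1_on V f \<Longrightarrow> C1_on V (\<lambda>x. - f x)"
  unfolding C1_on_def
proof (intro conjI ballI allI)
  fix j assume f: "(\<forall>x\<in>V. f differentiable at x) \<and> (\<forall>j. continuous_on V (partial f j))"
  have "continuous_on V (\<lambda>x. - partial f j x)"
    using f by (intro continuous_on_minus) auto
  then show "continuous_on V (partial (\<lambda>x. - f x) j)"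
    by (rule continuous_on_eq) (use f partial_uminus in auto)
qed (auto intro: differentiable_minus)

lemma C1_on_mult:
  assumes f: "C1_on V f" and g: "C1_on V g"
  shows "C1_on V (\<lambda>x. f x * g x)"
  unfolding C1_on_def
proof (intro conjI ballI allI)
  fix x assume "x \<in> V"
  then show "(\<lambda>x. f x * g x) differentiable at x"
    using f g unfolding C1_on_def by (simp add: differentiable_mult)
next
  fix j
  have "continuous_on V (\<lambda>x. f x * partial g j x + partial f j x * g x)"
    using f g C1_on_continuous_on[OF f] C1_on_continuous_on[OF g] unfolding C1_on_def
    by (intro continuous_on_add continuous_on_mult) auto
  moreover have "f x * partial g j x + partial f j x * g x = partial (\<lambda>x. f x * g x) j x"
    if "x \<in> V" for x
    using f g that unfolding C1_on_def by (simp add: partial_mult)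
  ultimately show "continuous_on V (partial (\<lambda>x. f x * g x) j)"
    by (rule continuous_on_eq)
qed

lemma C1_on_sum:
  assumes "finite A" "\<And>i. i \<in> A \<Longrightarrow> C1_on V (f i)"
  shows "C1_on V (\<lambda>x. \<Sum>i\<in>A. f i x)"
  unfolding C1_on_def
proof (intro conjI ballI allI)
  fix x assume "x \<in> V"
  then show "(\<lambda>x. \<Sum>i\<in>A. f i x) differentiable at x"
    using assms unfolding C1_on_def by (simp add: differentiable_sum)
next
  fix j
  have "continuous_on V (\<lambda>x. \<Sum>i\<in>A. partial (f i) j x)"
    using assms unfolding C1_on_def by (simp add: continuous_on_sum)
  moreover have "(\<Sum>i\<in>A. partial (f i) j x) = partial (\<lambda>x. \<Sum>i\<in>A. f i x) j x"
    if "x \<in> V" for x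
    using assms that unfolding C1_on_def by (simp add: partial_sum)
  ultimately show "continuous_on V (partial (\<lambda>x. \<Sum>i\<in>A. f i x) j)"
    by (rule continuous_on_eq)
qed

lemma C1_vec_on_matrix_vector_mult:
  assumes "C1_mat_on V K" "C1_vec_on V v"
  shows "C1_vec_on V (\<lambda>x. K x *v v x)"
  using assms unfolding C1_vec_on_def C1_mat_on_def
  by (simp add: matrix_vector_mult_def C1_on_sum C1_on_mult)

lemma C1_vec_on_grad: "C2_on V f \<Longrightarrow> C1_vec_on V (grad f)"
  by (simp add: C2_on_def C1_vec_on_def grad_def)

lemma C1_vec_on_heat_flux:
  assumes "C2_on V T" "C1_mat_on V K"
  shows "C1_vec_on V (heat_flux T K)"
proof -
  have "C1_vec_on V (\<lambda>x. K x *v grad T x)"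
    using assms by (intro C1_vec_on_matrix_vector_mult C1_vec_on_grad)
  then show ?thesis
    by (simp add: C1_vec_on_def heat_flux_def C1_on_uminus)
qed

lemma entropy_flux_eq_scaleR_heat_flux: "entropy_flux T K x = (1 / T x) *\<^sub>R heat_flux T K x"
  by (simp add: entropy_flux_def heat_flux_def)

lemma wnorm_sq_eq_inner: "wnorm_sq v X = v \<bullet> (X *v v)"
  by (simp add: wnorm_sq_def inner_commute)

lemma J_q_entropy_effort:
  assumes U: "open U" "x \<in> U" and rho: "\<And>y. y \<in> U \<Longrightarrow> \<rho> y \<noteq> 0" and Tx: "T x \<noteq> 0"
    and T_diff: "T differentiable at x"
    and q_diff: "\<And>i. (\<lambda>y. heat_flux T K y $ i) differentiable at x"
  shows "J_q \<rho> T K (\<lambda>y. \<rho> y * T y) x = - divg (heat_flux T K) x / (\<rho> x * T x)"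
proof -
  define q where "q = heat_flux T K"
  have grad_e_over_rho: "grad (\<lambda>z. \<rho> z * T z / \<rho> z) y = grad T y" if "y \<in> U" for y
    using rho by (intro grad_cong_open[OF U(1) that]) simp
  have Q: "Q_T \<rho> T K (\<lambda>y. \<rho> y * T y) x = - (grad T x \<bullet> q x) / (\<rho> x * (T x)\<^sup>2)"
    by (simp only: Q_T_def grad_e_over_rho[OF U(2)])
       (simp add: S_T_def q_def heat_flux_def wnorm_sq_eq_inner
         scaleR_matrix_vector_assoc[symmetric] power2_eq_square)
  have flux: "S_T T K y *v G_T \<rho> (\<lambda>y. \<rho> y * T y) y = (1 / T y) *\<^sub>R q y" if "y \<in> U" for y
    by (simp only: G_T_def grad_e_over_rho[OF that])
       (simp add: S_T_def q_def heat_flux_def scaleR_matrix_vector_assoc[symmetric]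
         linear_neg[OF matrix_vector_mul_linear])
  have "divg (\<lambda>y. S_T T K y *v G_T \<rho> (\<lambda>y. \<rho> y * T y) y) x = divg (\<lambda>y. (1 / T y) *\<^sub>R q y) x"
    by (rule divg_cong_open[OF U flux])
  also have "\<dots> = divg q x / T x - grad T x \<bullet> q x / (T x)\<^sup>2"
    using q_diff T_diff Tx
    by (subst divg_scaleR) (simp_all add: q_def derivative_intros grad_inverse)
  finally have D: "divg (\<lambda>y. S_T T K y *v G_T \<rho> (\<lambda>y. \<rho> y * T y) y) x
      = divg q x / T x - grad T x \<bullet> q x / (T x)\<^sup>2" .
  show ?thesis
    unfolding J_q_def G_T_adj_def Q D using Tx rho[OF U(2)]
    by (simp add: q_def field_simps power2_eq_square)
qed

theorem lemma2:
  fixes \<Omega> U :: "(real^3) set" and \<rho> T :: "real^3 \<Rightarrow> real"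
    and K :: "real^3 \<Rightarrow> real^3^3" and n :: "real^3 \<Rightarrow> real^3"
    and \<sigma> :: "(real^3) measure" and e\<^sub>s :: "real^3 \<Rightarrow> real"
  assumes dom: "open \<Omega>" "connected \<Omega>" "\<Omega> \<noteq> {}" "bounded \<Omega>"
    and bdry: "gauss_boundary \<Omega> \<sigma> n"
    and U: "open U" "closure \<Omega> \<subseteq> U"
    and rho_pos: "\<forall>x\<in>U. \<rho> x > 0" and T_pos: "\<forall>x\<in>U. T x > 0"
    and K_nonneg: "\<forall>x\<in>U. nonneg_matrix (K x)"
    and reg: "C1_on U \<rho>" "C2_on U T" "C1_mat_on U K"
    and es: "e\<^sub>s = (\<lambda>x. \<rho> x * T x)"
  shows "(\<forall>x\<in>\<Omega>. - (1 / (\<rho> x * T x)) * divg (heat_flux T K) x = J_q \<rho> T K e\<^sub>s x)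
       \<and> (\<lambda>x. e\<^sub>s x * J_q \<rho> T K e\<^sub>s x) integrable_on \<Omega>
       \<and> integral \<Omega> (\<lambda>x. e\<^sub>s x * J_q \<rho> T K e\<^sub>s x)
           = - integral\<^sup>L \<sigma> (\<lambda>x. T x * (entropy_flux T K x \<bullet> n x))"
proof -
  define q where "q = heat_flux T K"
  have q_C1: "C1_vec_on U q"
    unfolding q_def using reg(2,3) by (rule C1_vec_on_heat_flux)
  have \<Omega>_U: "\<Omega> \<subseteq> U" and frontier_U: "frontier \<Omega> \<subseteq> U"
    using U(2) closure_subset by (auto simp: frontier_def)
  have J: "J_q \<rho> T K e\<^sub>s x = - divg q x / (\<rho> x * T x)" if "x \<in> U" for x
    unfolding es q_def using U(1) that rho_pos T_pos q_C1 reg(2)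
    by (intro J_q_entropy_effort) (auto simp: q_def C1_vec_on_def C2_on_def C1_on_def)
  have density: "e\<^sub>s x * J_q \<rho> T K e\<^sub>s x = - divg q x" if "x \<in> \<Omega>" for x
  proof -
    have x: "x \<in> U" using that \<Omega>_U by blast
    then have "\<rho> x > 0" "T x > 0" using rho_pos T_pos by auto
    then show ?thesis
      unfolding J[OF x] by (simp add: es)
  qed
  have gauss: "divg q integrable_on \<Omega> \<and> integral \<Omega> (divg q) = integral\<^sup>L \<sigma> (\<lambda>x. q x \<bullet> n x)"
    using bdry U q_C1 unfolding gauss_boundary_def by blast
  have boundary: "integral\<^sup>L \<sigma> (\<lambda>x. T x * (entropy_flux T K x \<bullet> n x)) = integral\<^sup>L \<sigma> (\<lambda>x. q x \<bullet> n x)"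
  proof (rule Bochner_Integration.integral_cong[OF refl])
    fix x assume "x \<in> space \<sigma>"
    then have "T x > 0"
      using bdry frontier_U T_pos unfolding gauss_boundary_def by auto
    then show "T x * (entropy_flux T K x \<bullet> n x) = q x \<bullet> n x"
      by (simp add: entropy_flux_eq_scaleR_heat_flux q_def)
  qed
  have "(\<lambda>x. e\<^sub>s x * J_q \<rho> T K e\<^sub>s x) integrable_on \<Omega>"
    using integrable_neg[OF gauss[THEN conjunct1]] by (rule integrable_eq) (simp add: density)
  moreover have "integral \<Omega> (\<lambda>x. e\<^sub>s x * J_q \<rho> T K e\<^sub>s x) = - integral \<Omega> (divg q)"
    by (simp add: integral_cong[OF density] integral_neg gauss)
  moreover have "- (1 / (\<rho> x * T x)) * divg (heat_flux T K) x = J_q \<rho> T K e\<^sub>s x"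
    if "x \<in> \<Omega>" for x
    using that \<Omega>_U by (auto simp: J q_def)
  ultimately show ?thesis
    using gauss boundary by simp
qed

end
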